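(* Consider an instance of the bicriteria asymmetric traveling salesman problem (bi-ATSP) with tour set $\mathcal{C}$, vector criterion $D=(D_1,D_2)$, outcome set $\mathcal{D}=D(\mathcal{C})$, and $\mathcal{D}_i=D_i(\mathcal{C})$ for $i=1,2$. Suppose that $$P(\mathcal{D}) = \{ (y_1, y_2): y_2 = a - k y_1,\ y_1 \in \mathcal{D}_1,\ y_2 \in \mathcal{D}_2 \},$$ where $a>0$ and $k>0$ are constants. Suppose the 2nd criterion $D_2$ is more important than the 1st criterion $D_1$ with coefficient of relative importance $\theta''\in(0,1)$, and let $\hat{P}(\mathcal{D})$ be the corresponding reduced Pareto set (reduction with $i=2$, $j=1$, $\theta=\theta''$). If $\theta'' \geqslant 1/(k+1)$, then $\hat{P}(\mathcal{D})$ consists of exactly one element. If $\theta'' < 1/(k+1)$, then $\hat{P}(\mathcal{D}) = P(\mathcal{D})$.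
   Context: Bi-ATSP: given a complete directed graph $G=(V,E)$ on $n$ vertices, each arc $e\in E$ carries a weight vector $d(e)=(d_1(e),d_2(e))$ of positive numbers. $\mathcal{C}$ is the set of all $(n-1)!$ Hamiltonian circuits (tours) of $G$, and for a tour $C$, $D(C)=(D_1(C),D_2(C))$ with $D_j(C)=\sum_{e\in C} d_j(e)$. For vectors $y^*,y$, write $y^*\leq y$ if $y^*\neq y$ and $y^*_s\leqslant y_s$ for every coordinate $s$ (Pareto relation). For a vector criterion $F$ on $\mathcal{C}$, the set of pareto-optimal tours is $P_F(\mathcal{C})=\{C\in\mathcal{C}: \nexists C^*\in\mathcal{C},\ F(C^* )\leq F(C)\}$. The Pareto set is $P(\mathcal{D})=\{y\in\mathcal{D}: \nexists y^*\in\mathcal{D},\ y^*\leq y\}$. Reduced Pareto set: if criterion $D_i$ is declared more important than criterion $D_j$ ($\{i,j\}=\{1,2\}$) with coefficient of relative importance $\theta\in(0,1)$, define the new criterion $\hat D$ by $\hat D_j=\theta D_i+(1-\theta)D_j$ and $\hat D_i=D_i$, and set $\hat{P}(\mathcal{D})=D(P_{\hat D}(\mathcal{C}))$ (a subset of $P(\mathcal{D})$). *)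

theory Defs
  imports Complex_Main
begin

text \<open>A Hamiltonian circuit (tour) is represented by its arc set: for a list vs enumerating all
  vertices without repetition, the arcs (vs!0,vs!1), ..., (vs!(n-2),vs!(n-1)), (vs!(n-1),vs!0).\<close>

definition cyc_arcs :: "nat list \<Rightarrow> (nat \<times> nat) list" where
  "cyc_arcs vs = zip vs (tl vs @ [hd vs])"

definition tours :: "nat \<Rightarrow> (nat \<times> nat) set set" where
  "tours n = {set (cyc_arcs vs) | vs. distinct vs \<and> set vs = {..<n}}"

definition Dvec :: "(nat \<times> nat \<Rightarrow> real \<times> real) \<Rightarrow> (nat \<times> nat) set \<Rightarrow> real \<times> real" where
  "Dvec d C = ((\<Sum>e\<in>C. fst (d e)), (\<Sum>e\<in>C. snd (d e)))"

definition pareto_le :: "real \<times> real \<Rightarrow> real \<times> real \<Rightarrow> bool" where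
  "pareto_le y' y \<longleftrightarrow> y' \<noteq> y \<and> fst y' \<le> fst y \<and> snd y' \<le> snd y"

definition pareto_tours :: "('c \<Rightarrow> real \<times> real) \<Rightarrow> 'c set \<Rightarrow> 'c set" where
  "pareto_tours F Cs = {C \<in> Cs. \<not> (\<exists>C'\<in>Cs. pareto_le (F C') (F C))}"

definition pareto_set :: "(real \<times> real) set \<Rightarrow> (real \<times> real) set" where
  "pareto_set Ys = {y \<in> Ys. \<not> (\<exists>y'\<in>Ys. pareto_le y' y)}"

text \<open>Reduced criterion when criterion i is more important than criterion j ({i,j} = {1,2})
  with coefficient theta: \<open>D^_j = \<theta> D_i + (1-\<theta>) D_j\<close>, \<open>D^_i = D_i\<close>.\<close>
definition reduced_crit :: "nat \<Rightarrow> real \<Rightarrow> ('c \<Rightarrow> real \<times> real) \<Rightarrow> 'c \<Rightarrow> real \<times> real" where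
  "reduced_crit i \<theta> F C =
     (if i = 1 then (fst (F C), \<theta> * fst (F C) + (1 - \<theta>) * snd (F C))
      else (\<theta> * snd (F C) + (1 - \<theta>) * fst (F C), snd (F C)))"

definition reduced_pareto_set :: "nat \<Rightarrow> real \<Rightarrow> ('c \<Rightarrow> real \<times> real) \<Rightarrow> 'c set \<Rightarrow> (real \<times> real) set" where
  "reduced_pareto_set i \<theta> F Cs = F ` pareto_tours (reduced_crit i \<theta> F) Cs"

end

theory Submission
  imports Defs
begin

text \<open>On the line \<open>y\<^sub>2 = a - k y\<^sub>1\<close> that carries the Pareto set, the reduced criterion
  \<open>(\<theta> y\<^sub>2 + (1 - \<theta>) y\<^sub>1, y\<^sub>2)\<close> becomes \<open>(\<theta> a + (1 - \<theta> (k + 1)) y\<^sub>1, a - k y\<^sub>1)\<close>.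
  If \<open>1 - \<theta> (k + 1) \<le> 0\<close>, both components are non-increasing in \<open>y\<^sub>1\<close>, so the Pareto point
  with the largest \<open>y\<^sub>1\<close> dominates all others and is the only survivor. Otherwise the two
  components move in opposite directions, so no two Pareto points become comparable; since
  reduced-Pareto tours are Pareto tours and every dominated tour is dominated by a
  reduced-Pareto tour, no Pareto point is lost either.\<close>

lemma pareto_le_iff:
  "pareto_le y' y \<longleftrightarrow>
     fst y' \<le> fst y \<and> snd y' \<le> snd y \<and> (fst y' < fst y \<or> snd y' < snd y)"
  unfolding pareto_le_def by (cases y; cases y') auto

lemma pareto_le_trans: "pareto_le x y \<Longrightarrow> pareto_le y z \<Longrightarrow> pareto_le x z"
  unfolding pareto_le_iff by auto

lemma pareto_le_sum_less: "pareto_le y' y \<Longrightarrow> fst y' + snd y' < fst y + snd y"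
  unfolding pareto_le_iff by auto

lemma pareto_set_image: "pareto_set (F ` T) = F ` pareto_tours F T"
  unfolding pareto_set_def pareto_tours_def by auto

lemma pareto_tours_dominating:
  assumes "finite T" and "C \<in> T" and "C \<notin> pareto_tours F T"
  obtains D where "D \<in> pareto_tours F T" and "pareto_le (F D) (F C)"
proof -
  define S where "S = {C' \<in> T. pareto_le (F C') (F C)}"
  have "finite S" and "S \<noteq> {}"
    using assms unfolding S_def pareto_tours_def by auto
  \<comment> \<open>A dominator of \<open>C\<close> with the least coordinate sum is undominated, by transitivity.\<close>
  then obtain D where "D \<in> S" and D_min: "\<And>C'. C' \<in> S \<Longrightarrow>
      \<not> fst (F C') + snd (F C') < fst (F D) + snd (F D)"
    using ex_is_arg_min_if_finite[of S "\<lambda>C'. fst (F C') + snd (F C')"]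
    unfolding is_arg_min_def by blast
  have "\<not> pareto_le (F C') (F D)" if "C' \<in> T" for C'
  proof
    assume "pareto_le (F C') (F D)"
    moreover from \<open>D \<in> S\<close> have "pareto_le (F D) (F C)"
      unfolding S_def by blast
    ultimately have "C' \<in> S"
      using that pareto_le_trans unfolding S_def by blast
    with D_min \<open>pareto_le (F C') (F D)\<close> show False
      using pareto_le_sum_less by blast
  qed
  with \<open>D \<in> S\<close> have "D \<in> pareto_tours F T" and "pareto_le (F D) (F C)"
    unfolding pareto_tours_def S_def by auto
  then show thesis by (rule that)
qed

lemma pareto_tours_nonempty:
  assumes "finite T" and "T \<noteq> {}"
  shows "pareto_tours F T \<noteq> {}"
proof -
  from assms obtain C where "C \<in> T" by blast
  show ?thesis
  proof (cases "C \<in> pareto_tours F T")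
    case False
    then show ?thesis
      using pareto_tours_dominating[OF assms(1) \<open>C \<in> T\<close>] by blast
  qed blast
qed

lemma pareto_le_reduced_crit:
  assumes "0 \<le> \<theta>" and "\<theta> < 1" and "pareto_le (F C') (F C)"
  shows "pareto_le (reduced_crit i \<theta> F C') (reduced_crit i \<theta> F C)"
proof -
  have combine: "\<theta> * p' + (1 - \<theta>) * q' \<le> \<theta> * p + (1 - \<theta>) * q"
    and combine_strict: "q' < q \<Longrightarrow> \<theta> * p' + (1 - \<theta>) * q' < \<theta> * p + (1 - \<theta>) * q"
    if "p' \<le> p" and "q' \<le> q" for p p' q q' :: real
  proof -
    have "\<theta> * p' \<le> \<theta> * p"
      using that assms(1) by (simp add: mult_left_mono)
    moreover have "(1 - \<theta>) * q' \<le> (1 - \<theta>) * q"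
      using that assms(2) by simp
    moreover have "q' < q \<Longrightarrow> (1 - \<theta>) * q' < (1 - \<theta>) * q"
      using assms(2) by simp
    ultimately show "\<theta> * p' + (1 - \<theta>) * q' \<le> \<theta> * p + (1 - \<theta>) * q"
      and "q' < q \<Longrightarrow> \<theta> * p' + (1 - \<theta>) * q' < \<theta> * p + (1 - \<theta>) * q"
      by linarith+
  qed
  from assms(3) have le: "fst (F C') \<le> fst (F C)" "snd (F C') \<le> snd (F C)"
    and strict: "fst (F C') < fst (F C) \<or> snd (F C') < snd (F C)"
    unfolding pareto_le_iff by auto
  show ?thesis
    unfolding pareto_le_iff reduced_crit_def
    using le strict combine[OF le] combine[OF le(2,1)]
      combine_strict[OF le] combine_strict[OF le(2,1)] by auto
qed

lemma pareto_tours_reduced_crit_subset: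
  assumes "0 \<le> \<theta>" and "\<theta> < 1"
  shows "pareto_tours (reduced_crit i \<theta> F) T \<subseteq> pareto_tours F T"
proof
  fix C assume C: "C \<in> pareto_tours (reduced_crit i \<theta> F) T"
  have "\<not> pareto_le (F C') (F C)" if "C' \<in> T" for C'
  proof
    assume "pareto_le (F C') (F C)"
    then have "pareto_le (reduced_crit i \<theta> F C') (reduced_crit i \<theta> F C)"
      by (rule pareto_le_reduced_crit[OF assms])
    with C \<open>C' \<in> T\<close> show False
      unfolding pareto_tours_def by blast
  qed
  with C show "C \<in> pareto_tours F T"
    unfolding pareto_tours_def by blast
qed

lemma reduced_crit_2_on_line:
  assumes "snd (F C) = a - k * fst (F C)"
  shows "reduced_crit 2 \<theta> F C = (\<theta> * a + (1 - \<theta> * (k + 1)) * fst (F C), a - k * fst (F C))"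
  unfolding reduced_crit_def assms by (simp add: algebra_simps)

lemma reduced_crit_2_on_line_dominated:
  assumes "k > 0" and "1 / (k + 1) \<le> \<theta>"
    and "snd (F C) = a - k * fst (F C)" and "snd (F C') = a - k * fst (F C')"
    and "fst (F C) < fst (F C')"
  shows "pareto_le (reduced_crit 2 \<theta> F C') (reduced_crit 2 \<theta> F C)"
proof -
  have "1 - \<theta> * (k + 1) \<le> 0"
    using assms(1,2) by (simp add: field_simps)
  then have "(1 - \<theta> * (k + 1)) * fst (F C') \<le> (1 - \<theta> * (k + 1)) * fst (F C)"
    using assms(5) by (simp add: mult_left_mono_neg)
  moreover have "k * fst (F C) < k * fst (F C')"
    using assms(1,5) by simp
  ultimately show ?thesis
    unfolding reduced_crit_2_on_line[where F = F and C = C, OF assms(3)]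
      reduced_crit_2_on_line[where F = F and C = C', OF assms(4)] pareto_le_iff
    by simp
qed

lemma reduced_crit_2_on_line_not_dominated:
  assumes "k > 0" and "\<theta> < 1 / (k + 1)"
    and "snd (F C) = a - k * fst (F C)" and "snd (F C') = a - k * fst (F C')"
  shows "\<not> pareto_le (reduced_crit 2 \<theta> F C') (reduced_crit 2 \<theta> F C)"
proof
  assume "pareto_le (reduced_crit 2 \<theta> F C') (reduced_crit 2 \<theta> F C)"
  then have first: "(1 - \<theta> * (k + 1)) * fst (F C') \<le> (1 - \<theta> * (k + 1)) * fst (F C)"
    and second: "k * fst (F C) \<le> k * fst (F C')"
    and strict: "fst (F C') \<noteq> fst (F C)"
    unfolding reduced_crit_2_on_line[where F = F and C = C, OF assms(3)]
      reduced_crit_2_on_line[where F = F and C = C', OF assms(4)] pareto_le_iff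
    by auto
  have "1 - \<theta> * (k + 1) > 0"
    using assms(1,2) by (simp add: field_simps)
  with first have "fst (F C') \<le> fst (F C)"
    by simp
  moreover from second assms(1) have "fst (F C) \<le> fst (F C')"
    by simp
  ultimately show False
    using strict by simp
qed

lemma reduced_pareto_set_singleton:
  assumes "finite T" and "T \<noteq> {}" and "k > 0" and "1 / (k + 1) \<le> \<theta>" and "\<theta> < 1"
    and line: "\<forall>y\<in>pareto_set (F ` T). snd y = a - k * fst y"
  shows "\<exists>y. reduced_pareto_set 2 \<theta> F T = {y}"
proof -
  define R where "R = reduced_crit 2 \<theta> F"
  have "0 < 1 / (k + 1)"
    using \<open>k > 0\<close> by simp
  then have "0 \<le> \<theta>"
    using assms(4) by linarith
  have R_pareto: "pareto_tours R T \<subseteq> pareto_tours F T"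
    unfolding R_def by (rule pareto_tours_reduced_crit_subset[OF \<open>0 \<le> \<theta>\<close> \<open>\<theta> < 1\<close>])
  have on_line: "snd (F C) = a - k * fst (F C)" if "C \<in> pareto_tours F T" for C
    using line that unfolding pareto_set_image by blast
  define xs where "xs = (\<lambda>C. fst (F C)) ` pareto_tours F T"
  have "finite xs"
    using \<open>finite T\<close> unfolding xs_def pareto_tours_def by simp
  moreover have "xs \<noteq> {}"
    using pareto_tours_nonempty[OF assms(1,2)] unfolding xs_def by simp
  ultimately have "Max xs \<in> xs"
    by (rule Max_in)
  then obtain M where "Max xs = fst (F M)" and M: "M \<in> pareto_tours F T"
    unfolding xs_def by (rule imageE)
  have M_max: "fst (F C) \<le> fst (F M)" if "C \<in> pareto_tours F T" for C
    unfolding \<open>Max xs = fst (F M)\<close>[symmetric] using \<open>finite xs\<close>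
    by (rule Max_ge) (simp add: xs_def that)
  have "F C = F M" if C: "C \<in> pareto_tours R T" for C
  proof -
    have "C \<in> pareto_tours F T"
      using C R_pareto by blast
    have "\<not> fst (F C) < fst (F M)"
    proof
      assume "fst (F C) < fst (F M)"
      with on_line[OF \<open>C \<in> pareto_tours F T\<close>] on_line[OF M] have "pareto_le (R M) (R C)"
        unfolding R_def by (rule reduced_crit_2_on_line_dominated[OF assms(3,4)])
      moreover have "M \<in> T"
        using M unfolding pareto_tours_def by simp
      ultimately show False
        using C unfolding pareto_tours_def by blast
    qed
    then have "fst (F C) = fst (F M)"
      using M_max[OF \<open>C \<in> pareto_tours F T\<close>] by simp
    moreover from this have "snd (F C) = snd (F M)"
      using on_line[OF \<open>C \<in> pareto_tours F T\<close>] on_line[OF M] by simp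
    ultimately show "F C = F M"
      by (rule prod_eqI)
  qed
  moreover have "pareto_tours R T \<noteq> {}"
    using assms(1,2) by (rule pareto_tours_nonempty)
  ultimately have "F ` pareto_tours R T = {F M}"
    by auto
  then show ?thesis
    unfolding reduced_pareto_set_def R_def by (rule exI)
qed

lemma reduced_pareto_set_eq_pareto_set:
  assumes "finite T" and "k > 0" and "0 \<le> \<theta>" and "\<theta> < 1 / (k + 1)"
    and line: "\<forall>y\<in>pareto_set (F ` T). snd y = a - k * fst y"
  shows "reduced_pareto_set 2 \<theta> F T = pareto_set (F ` T)"
proof -
  define R where "R = reduced_crit 2 \<theta> F"
  have "1 / (k + 1) < 1"
    using \<open>k > 0\<close> by simp
  then have "\<theta> < 1"
    using assms(4) by linarith
  have R_pareto: "pareto_tours R T \<subseteq> pareto_tours F T"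
    unfolding R_def by (rule pareto_tours_reduced_crit_subset[OF \<open>0 \<le> \<theta>\<close> \<open>\<theta> < 1\<close>])
  have on_line: "snd (F C) = a - k * fst (F C)" if "C \<in> pareto_tours F T" for C
    using line that unfolding pareto_set_image by blast
  have "C \<in> pareto_tours R T" if C: "C \<in> pareto_tours F T" for C
  proof (rule ccontr)
    assume "C \<notin> pareto_tours R T"
    moreover have "C \<in> T"
      using C unfolding pareto_tours_def by simp
    \<comment> \<open>A reduced-Pareto dominator is itself a Pareto tour, hence lies on the line too.\<close>
    ultimately obtain D where "D \<in> pareto_tours R T" and "pareto_le (R D) (R C)"
      using pareto_tours_dominating[OF \<open>finite T\<close>] by blast
    moreover have "D \<in> pareto_tours F T"
      using \<open>D \<in> pareto_tours R T\<close> R_pareto by blast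
    ultimately show False
      using reduced_crit_2_on_line_not_dominated[where F = F and C = C and C' = D,
          OF assms(2,4) on_line[OF C] on_line[OF \<open>D \<in> pareto_tours F T\<close>]]
      unfolding R_def by blast
  qed
  with R_pareto have "pareto_tours R T = pareto_tours F T"
    by blast
  then show ?thesis
    unfolding reduced_pareto_set_def pareto_set_image R_def by simp
qed

lemma set_cyc_arcs_subset: "set (cyc_arcs vs) \<subseteq> set vs \<times> set vs"
proof (cases vs)
  case Nil
  then show ?thesis by (simp add: cyc_arcs_def)
next
  case (Cons v vs')
  then show ?thesis
    unfolding cyc_arcs_def by (auto dest: set_zip_leftD set_zip_rightD)
qed

lemma finite_tours: "finite (tours n)"
proof (rule finite_subset)
  show "tours n \<subseteq> Pow ({..<n} \<times> {..<n})"
    using set_cyc_arcs_subset unfolding tours_def by fastforce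
qed simp

lemma tours_nonempty: "tours n \<noteq> {}"
proof -
  have "set (cyc_arcs [0..<n]) \<in> tours n"
    unfolding tours_def by auto
  then show ?thesis by blast
qed

text \<open>Only the inclusion of the Pareto set in the line is needed.\<close>

theorem theorem3:
  fixes n :: nat and d :: "nat \<times> nat \<Rightarrow> real \<times> real" and a k \<theta> :: real
  assumes "n \<ge> 2"
    and "\<forall>u<n. \<forall>v<n. u \<noteq> v \<longrightarrow> fst (d (u, v)) > 0 \<and> snd (d (u, v)) > 0"
    and "a > 0" and "k > 0"
    and "0 < \<theta>" and "\<theta> < 1"
    and "pareto_set (Dvec d ` tours n) =
           {(y1, y2). y2 = a - k * y1 \<and> y1 \<in> (fst \<circ> Dvec d) ` tours n
                                     \<and> y2 \<in> (snd \<circ> Dvec d) ` tours n}"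
  shows "(\<theta> \<ge> 1 / (k + 1) \<longrightarrow> (\<exists>y. reduced_pareto_set 2 \<theta> (Dvec d) (tours n) = {y}))
       \<and> (\<theta> < 1 / (k + 1) \<longrightarrow> reduced_pareto_set 2 \<theta> (Dvec d) (tours n) = pareto_set (Dvec d ` tours n))"
proof -
  have line: "\<forall>y\<in>pareto_set (Dvec d ` tours n). snd y = a - k * fst y"
    using assms(7) by auto
  show ?thesis
    using reduced_pareto_set_singleton[OF finite_tours tours_nonempty \<open>k > 0\<close> _ \<open>\<theta> < 1\<close> line]
      reduced_pareto_set_eq_pareto_set[OF finite_tours \<open>k > 0\<close> _ _ line] \<open>0 < \<theta>\<close>
    by auto
qed

end
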